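(* Let $N\ge 2$ and let $\Gamma_1,\dots,\Gamma_N$ be nonzero real numbers. Consider the system of $N$ planar point sources $$\dot z_k = -\sum_{l\neq k}\Gamma_l\,\frac{z_k-z_l}{|z_k-z_l|^2}=-\sum_{l\neq k}\frac{\Gamma_l}{\bar z_k-\bar z_l},\qquad k=1,\dots,N,$$ on the set of configurations $(z_1,\dots,z_N)\in\mathbb{C}^N$ with $z_j\neq z_k$ for all $j\neq k$, and let $I=\sum_{k=1}^N\Gamma_k|z_k|^2$ be the moment of inertia. If $\sum_{l<k}\Gamma_k\Gamma_l=0$, then $I$ is a first integral of the system. If $\sum_{l<k}\Gamma_k\Gamma_l\neq 0$, then all solutions are gradient-like with respect to $I$, i.e. $I$ is strictly monotone along every solution.
   Context: The number $-\Gamma_k$ is the intensity of the $k$-th point source; the sum $\sum_{l<k}\Gamma_k\Gamma_l$ runs over all unordered pairs of distinct indices. *)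

theory Defs
  imports "HOL-Analysis.Analysis"
begin

definition source_field :: "nat \<Rightarrow> (nat \<Rightarrow> real) \<Rightarrow> (nat \<Rightarrow> complex) \<Rightarrow> nat \<Rightarrow> complex" where
  "source_field N \<Gamma> z k =
     - (\<Sum>l\<in>{1..N} - {k}. complex_of_real (\<Gamma> l) / (cnj (z k) - cnj (z l)))"

definition inertia :: "nat \<Rightarrow> (nat \<Rightarrow> real) \<Rightarrow> (nat \<Rightarrow> complex) \<Rightarrow> real" where
  "inertia N \<Gamma> z = (\<Sum>k=1..N. \<Gamma> k * (cmod (z k))\<^sup>2)"

definition collision_free :: "nat \<Rightarrow> (nat \<Rightarrow> complex) \<Rightarrow> bool" where
  "collision_free N z \<longleftrightarrow> (\<forall>j\<in>{1..N}. \<forall>k\<in>{1..N}. j \<noteq> k \<longrightarrow> z j \<noteq> z k)"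

definition is_solution :: "nat \<Rightarrow> (nat \<Rightarrow> real) \<Rightarrow> (real \<Rightarrow> nat \<Rightarrow> complex) \<Rightarrow> real set \<Rightarrow> bool" where
  "is_solution N \<Gamma> z T \<longleftrightarrow> is_interval T \<and>
     (\<forall>t\<in>T. collision_free N (z t) \<and>
        (\<forall>k\<in>{1..N}. ((\<lambda>s. z s k) has_vector_derivative source_field N \<Gamma> (z t) k) (at t within T)))"

definition pair_sum :: "nat \<Rightarrow> (nat \<Rightarrow> real) \<Rightarrow> real" where
  "pair_sum N \<Gamma> = (\<Sum>k=1..N. \<Sum>l\<in>{1..<k}. \<Gamma> k * \<Gamma> l)"

end

theory Submission imports Defs begin

text \<open>Along every solution \<open>dI/dt = -2 \<Sum>\<^sub>l\<^sub><\<^sub>k \<Gamma>\<^sub>k \<Gamma>\<^sub>l\<close>: writing \<open>w = cnj z\<close>,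
  the pair \<open>(k, l)\<close> contributes \<open>-2 \<Gamma>\<^sub>k \<Gamma>\<^sub>l Re (w\<^sub>k/(w\<^sub>k - w\<^sub>l) + w\<^sub>l/(w\<^sub>l - w\<^sub>k))\<close>,
  and the bracket equals \<open>1\<close>. Hence \<open>I\<close> is an affine function of time, constant or strictly
  monotone according to the sign of the pair sum.\<close>

lemma has_real_derivative_norm_square:
  fixes f :: "real \<Rightarrow> 'a::real_inner"
  assumes "(f has_vector_derivative v) (at t within T)"
  shows "((\<lambda>s. (norm (f s))\<^sup>2) has_real_derivative 2 * (f t \<bullet> v)) (at t within T)"
proof -
  have f': "(f has_derivative (\<lambda>h. h *\<^sub>R v)) (at t within T)"
    using assms by (simp add: has_vector_derivative_def)
  have "((\<lambda>s. f s \<bullet> f s) has_derivative (\<lambda>h. f t \<bullet> (h *\<^sub>R v) + (h *\<^sub>R v) \<bullet> f t)) (at t within T)"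
    by (rule has_derivative_inner[OF f' f'])
  moreover have "(\<lambda>h. f t \<bullet> (h *\<^sub>R v) + (h *\<^sub>R v) \<bullet> f t) = (*) (2 * (f t \<bullet> v))"
    by (auto simp: inner_commute)
  ultimately show ?thesis
    by (simp add: power2_norm_eq_inner has_field_derivative_def)
qed

lemma inner_complex_eq_Re_cnj_mult: "(a::complex) \<bullet> b = Re (cnj a * b)"
  by (simp add: inner_complex_def)

lemma Re_divide_diff_add_swap:
  fixes a b :: complex
  assumes "a \<noteq> b"
  shows "Re (a / (a - b)) + Re (b / (b - a)) = 1"
proof -
  have "a / (a - b) + b / (b - a) = a / (a - b) - b / (a - b)"
    by (metis minus_diff_eq divide_minus_right diff_conv_add_uminus)
  also have "\<dots> = 1"
    using assms by (simp add: diff_divide_distrib[symmetric])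
  finally show ?thesis
    by (metis plus_complex.sel(1) one_complex.sel(1))
qed

lemma sum_off_diagonal_eq_sum_pairs:
  fixes h :: "nat \<Rightarrow> nat \<Rightarrow> 'a::comm_monoid_add"
  shows "(\<Sum>k\<in>{1..N}. \<Sum>l\<in>{1..N} - {k}. h k l) = (\<Sum>k\<in>{1..N}. \<Sum>l\<in>{1..<k}. h k l + h l k)"
proof -
  have split: "(\<Sum>l\<in>{1..N} - {k}. h k l) = (\<Sum>l\<in>{1..<k}. h k l) + (\<Sum>l\<in>{l\<in>{1..N}. k < l}. h k l)"
    if "k \<in> {1..N}" for k
  proof -
    have "{1..N} - {k} = {1..<k} \<union> {l\<in>{1..N}. k < l}"
      using that by auto
    moreover have "(\<Sum>l\<in>{1..<k} \<union> {l\<in>{1..N}. k < l}. h k l) = (\<Sum>l\<in>{1..<k}. h k l) + (\<Sum>l\<in>{l\<in>{1..N}. k < l}. h k l)"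
      by (rule sum.union_disjoint) auto
    ultimately show ?thesis
      by simp
  qed
  have "(\<Sum>k\<in>{1..N}. \<Sum>l\<in>{l\<in>{1..N}. k < l}. h k l) = (\<Sum>l\<in>{1..N}. \<Sum>k\<in>{k\<in>{1..N}. k < l}. h k l)"
    by (rule sum.swap_restrict) simp_all
  also have "\<dots> = (\<Sum>l\<in>{1..N}. \<Sum>k\<in>{1..<l}. h k l)"
    by (intro sum.cong) auto
  finally have swap: "(\<Sum>k\<in>{1..N}. \<Sum>l\<in>{l\<in>{1..N}. k < l}. h k l) = (\<Sum>k\<in>{1..N}. \<Sum>l\<in>{1..<k}. h l k)" .
  have "(\<Sum>k\<in>{1..N}. \<Sum>l\<in>{1..N} - {k}. h k l)
        = (\<Sum>k\<in>{1..N}. (\<Sum>l\<in>{1..<k}. h k l) + (\<Sum>l\<in>{l\<in>{1..N}. k < l}. h k l))"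
    by (rule sum.cong[OF refl split])
  also have "\<dots> = (\<Sum>k\<in>{1..N}. \<Sum>l\<in>{1..<k}. h k l) + (\<Sum>k\<in>{1..N}. \<Sum>l\<in>{1..<k}. h l k)"
    by (simp only: sum.distrib swap)
  also have "\<dots> = (\<Sum>k\<in>{1..N}. \<Sum>l\<in>{1..<k}. h k l + h l k)"
    by (simp only: sum.distrib)
  finally show ?thesis .
qed

lemma inertia_virial_identity:
  assumes "collision_free N w"
  shows "(\<Sum>k=1..N. \<Gamma> k * (w k \<bullet> source_field N \<Gamma> w k)) = - pair_sum N \<Gamma>"
proof -
  define g where "g k l = Re (cnj (w k) / (cnj (w k) - cnj (w l)))" for k l
  have Re_of_real_mult: "Re (complex_of_real r * x) = r * Re x" for r x
    by simp
  have term_k: "\<Gamma> k * (w k \<bullet> source_field N \<Gamma> w k) = - (\<Sum>l\<in>{1..N} - {k}. \<Gamma> k * \<Gamma> l * g k l)" for k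
  proof -
    have "cnj (w k) * source_field N \<Gamma> w k
          = - (\<Sum>l\<in>{1..N} - {k}. complex_of_real (\<Gamma> l) * (cnj (w k) / (cnj (w k) - cnj (w l))))"
      unfolding source_field_def mult_minus_right sum_distrib_left
      by (intro arg_cong[where f=uminus] sum.cong refl) (simp add: mult.commute)
    then show ?thesis
      unfolding inner_complex_eq_Re_cnj_mult g_def
      by (simp only: uminus_complex.sel Re_sum Re_of_real_mult sum_distrib_left mult_minus_right mult.assoc)
  qed
  have pair_kl: "\<Gamma> k * \<Gamma> l * g k l + \<Gamma> l * \<Gamma> k * g l k = \<Gamma> k * \<Gamma> l"
    if "k \<in> {1..N}" "l \<in> {1..<k}" for k l
  proof -
    have "cnj (w k) \<noteq> cnj (w l)"
      using assms that unfolding collision_free_def by auto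
    then have "g k l + g l k = 1"
      unfolding g_def by (rule Re_divide_diff_add_swap)
    have "\<Gamma> k * \<Gamma> l * g k l + \<Gamma> l * \<Gamma> k * g l k = \<Gamma> k * \<Gamma> l * (g k l + g l k)"
      by (simp add: algebra_simps)
    with \<open>g k l + g l k = 1\<close> show ?thesis by simp
  qed
  have "(\<Sum>k=1..N. \<Gamma> k * (w k \<bullet> source_field N \<Gamma> w k))
        = - (\<Sum>k\<in>{1..N}. \<Sum>l\<in>{1..<k}. \<Gamma> k * \<Gamma> l * g k l + \<Gamma> l * \<Gamma> k * g l k)"
    by (simp only: term_k sum_negf sum_off_diagonal_eq_sum_pairs)
  also have "\<dots> = - pair_sum N \<Gamma>"
    unfolding pair_sum_def by (auto intro!: sum.cong pair_kl)
  finally show ?thesis .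
qed

lemma inertia_has_real_derivative:
  assumes sol: "is_solution N \<Gamma> z T" and "t \<in> T"
  shows "((\<lambda>s. inertia N \<Gamma> (z s)) has_real_derivative - 2 * pair_sum N \<Gamma>) (at t within T)"
proof -
  have deriv: "((\<lambda>s. inertia N \<Gamma> (z s)) has_real_derivative
          (\<Sum>k=1..N. \<Gamma> k * (2 * (z t k \<bullet> source_field N \<Gamma> (z t) k)))) (at t within T)"
    unfolding inertia_def using sol \<open>t \<in> T\<close> unfolding is_solution_def
    by (intro DERIV_sum DERIV_cmult has_real_derivative_norm_square) blast
  have "collision_free N (z t)"
    using sol \<open>t \<in> T\<close> unfolding is_solution_def by blast
  then have "(\<Sum>k=1..N. \<Gamma> k * (2 * (z t k \<bullet> source_field N \<Gamma> (z t) k))) = - 2 * pair_sum N \<Gamma>"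
    using inertia_virial_identity
    by (simp add: mult.left_commute[of _ 2] sum_distrib_left[symmetric])
  with deriv show ?thesis
    by simp
qed

lemma inertia_affine_along_solution:
  assumes sol: "is_solution N \<Gamma> z T"
  obtains c where "\<And>t. t \<in> T \<Longrightarrow> inertia N \<Gamma> (z t) = c - 2 * pair_sum N \<Gamma> * t"
proof -
  have "convex T"
    using sol is_interval_convex unfolding is_solution_def by blast
  moreover have "((\<lambda>s. inertia N \<Gamma> (z s) + 2 * pair_sum N \<Gamma> * s) has_real_derivative 0) (at t within T)"
    if "t \<in> T" for t
    using inertia_has_real_derivative[OF sol that]
    by (auto intro!: derivative_eq_intros)
  ultimately obtain c where "\<forall>t\<in>T. inertia N \<Gamma> (z t) + 2 * pair_sum N \<Gamma> * t = c"
    using has_field_derivative_zero_constant by blast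
  then show ?thesis
    by (intro that[of c]) (simp add: eq_diff_eq)
qed

theorem mainTheorem2:
  fixes N :: nat and \<Gamma> :: "nat \<Rightarrow> real"
  assumes "N \<ge> 2"
    and "\<forall>k\<in>{1..N}. \<Gamma> k \<noteq> 0"
  shows "(pair_sum N \<Gamma> = 0 \<longrightarrow>
            (\<forall>z T. is_solution N \<Gamma> z T \<longrightarrow>
               (\<exists>c. \<forall>t\<in>T. inertia N \<Gamma> (z t) = c)))
       \<and> (pair_sum N \<Gamma> \<noteq> 0 \<longrightarrow>
            (\<forall>z T. is_solution N \<Gamma> z T \<longrightarrow>
               ((\<forall>s\<in>T. \<forall>t\<in>T. s < t \<longrightarrow> inertia N \<Gamma> (z s) < inertia N \<Gamma> (z t)) \<or>
                (\<forall>s\<in>T. \<forall>t\<in>T. s < t \<longrightarrow> inertia N \<Gamma> (z s) > inertia N \<Gamma> (z t)))))"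
proof (intro conjI impI allI)
  fix z T assume "pair_sum N \<Gamma> = 0" "is_solution N \<Gamma> z T"
  then show "\<exists>c. \<forall>t\<in>T. inertia N \<Gamma> (z t) = c"
    by (metis inertia_affine_along_solution mult_zero_left mult_zero_right)
next
  fix z T assume "pair_sum N \<Gamma> \<noteq> 0" "is_solution N \<Gamma> z T"
  then obtain c where I: "\<And>t. t \<in> T \<Longrightarrow> inertia N \<Gamma> (z t) = c - 2 * pair_sum N \<Gamma> * t"
    using inertia_affine_along_solution by blast
  consider "pair_sum N \<Gamma> < 0" | "pair_sum N \<Gamma> > 0"
    using \<open>pair_sum N \<Gamma> \<noteq> 0\<close> by linarith
  then show "(\<forall>s\<in>T. \<forall>t\<in>T. s < t \<longrightarrow> inertia N \<Gamma> (z s) < inertia N \<Gamma> (z t)) \<or>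
             (\<forall>s\<in>T. \<forall>t\<in>T. s < t \<longrightarrow> inertia N \<Gamma> (z s) > inertia N \<Gamma> (z t))"
    by cases (auto simp: I intro: mult_strict_left_mono_neg mult_strict_left_mono)
qed

end
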